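(* Let $\alpha=[0;a_1,a_2,\ldots]\in\mathbf{Bad}$ and let $(p_n/q_n)_{n\ge1}$ be the sequence of its convergents. Assume that there exist a positive rational number $x$ and two sequences of finite words $(U_k)_{k\ge1}$ and $(V_k)_{k\ge1}$ over the positive integers such that, for every $k\ge1$, the sequence of partial quotients $a_1a_2\ldots$ of $\alpha$ begins with the word $V_kU_k\overline{U}_k$, and $|U_{k+1}|>|U_k|\ge x|V_k|$. Set $M=\limsup_{\ell\to+\infty}q_\ell^{1/\ell}$ and $m=\liminf_{\ell\to+\infty}q_\ell^{1/\ell}$. If $$x>\frac32\cdot\frac{\log M}{\log m}-\frac12,$$ then for every real number $\beta$ equal to $\alpha$ up to a rational homography one has $\inf_{q\ge1}q\cdot\Vert q\alpha\Vert\cdot\Vert q\beta\Vert=0$.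
   Context: For a real number $y$, $\Vert y\Vert$ denotes the distance from $y$ to the nearest integer. $\mathbf{Bad}=\{\alpha\in\mathbb{R} : \inf_{q\ge1} q\Vert q\alpha\Vert>0\}$ (equivalently, real numbers with bounded partial quotients). A finite word $W=w_1\ldots w_r$ over the positive integers is identified with the sequence of partial quotients $w_1,\ldots,w_r$; $|W|$ denotes its length and $\overline{W}=w_r\ldots w_1$ its mirror image. A real number $\beta$ is equal to $\alpha$ up to a rational homography if $\beta=(a\alpha+b)/(c\alpha+d)$ for some integers $a,b,c,d$ with $ad-bc\neq0$. *)

theory Defs
  imports "HOL-Analysis.Analysis"
begin

definition dnint :: "real \<Rightarrow> real" where
  "dnint y = min (frac y) (1 - frac y)"

definition Bad :: "real set" where
  "Bad = {\<alpha>. (INF q\<in>{1::nat..}. real q * dnint (real q * \<alpha>)) > 0}"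

text \<open>Numerators and denominators of the convergents of [0; a 1, a 2, ...]
  (the value a 0 is ignored; p 0 / q 0 = 0/1).\<close>
fun cfp :: "(nat \<Rightarrow> nat) \<Rightarrow> nat \<Rightarrow> nat" where
  "cfp a 0 = 0"
| "cfp a (Suc 0) = 1"
| "cfp a (Suc (Suc n)) = a (Suc (Suc n)) * cfp a (Suc n) + cfp a n"

fun cfq :: "(nat \<Rightarrow> nat) \<Rightarrow> nat \<Rightarrow> nat" where
  "cfq a 0 = 1"
| "cfq a (Suc 0) = a 1"
| "cfq a (Suc (Suc n)) = a (Suc (Suc n)) * cfq a (Suc n) + cfq a n"

definition is_cf_expansion :: "real \<Rightarrow> (nat \<Rightarrow> nat) \<Rightarrow> bool" where
  "is_cf_expansion \<alpha> a \<longleftrightarrow> (\<forall>n\<ge>1. a n > 0) \<and>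
     (\<lambda>n. real (cfp a n) / real (cfq a n)) \<longlonglongrightarrow> \<alpha>"

definition begins_with :: "(nat \<Rightarrow> nat) \<Rightarrow> nat list \<Rightarrow> bool" where
  "begins_with a W \<longleftrightarrow> (\<forall>i<length W. a (Suc i) = W ! i)"


end

theory Submission
  imports Defs
begin

text \<open>
  Write \<open>M\<^sub>k = [[q\<^sub>k, q\<^sub>k\<^sub>-\<^sub>1], [p\<^sub>k, p\<^sub>k\<^sub>-\<^sub>1]]\<close>, the product of the matrices \<open>[[a\<^sub>i, 1], [1, 0]]\<close>, \<open>i \<le> k\<close>.
  If the expansion of \<open>\<alpha>\<close> begins with \<open>V U \<^bold>\<open>rev\<close> U\<close>, put \<open>n = |V|\<close> and \<open>N = n + 2|U|\<close>; then
  \<open>M\<^sub>N = M\<^sub>n P P\<^sup>T\<close>, so \<open>M\<^sub>N M\<^sub>n\<^sup>T = [[A\<^sub>1\<^sub>1, A\<^sub>1\<^sub>2], [A\<^sub>1\<^sub>2, A\<^sub>2\<^sub>2]]\<close> is a symmetric integer matrix with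
  \<open>A\<^sub>1\<^sub>1 \<asymp> q\<^sub>N q\<^sub>n\<close> whose two rows are both good approximations:
  \<open>|A\<^sub>1\<^sub>1 \<alpha> - A\<^sub>1\<^sub>2|, |A\<^sub>1\<^sub>2 \<alpha> - A\<^sub>2\<^sub>2| \<le> 2 q\<^sub>n / q\<^sub>N\<close>. For \<open>\<beta> = (a \<alpha> + b) / (c \<alpha> + d)\<close> the integer
  \<open>Q = d A\<^sub>1\<^sub>1 + c A\<^sub>1\<^sub>2\<close> then satisfies \<open>Q \<parallel>Q \<alpha>\<parallel> \<parallel>Q \<beta>\<parallel> \<lless> q\<^sub>n\<^sup>3 / q\<^sub>N\<close>. Since
  \<open>m'\<^sup>l \<lless> q\<^sub>l \<lless> M'\<^sup>l\<close> for all \<open>m' < m\<close>, \<open>M' > M\<close> and \<open>n \<le> |U| / x\<close>, this bound is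
  \<open>\<lless> r\<^bsup>|U|\<^esup>\<close> with \<open>r < 1\<close> precisely when \<open>x > 3/2 \<cdot> log M / log m - 1/2\<close>.
\<close>

section \<open>Continuant matrices\<close>

datatype mat2 = Mat2 int int int int

fun mat2_mult :: "mat2 \<Rightarrow> mat2 \<Rightarrow> mat2" where
  "mat2_mult (Mat2 a b c d) (Mat2 e f g h) = Mat2 (a*e + b*g) (a*f + b*h) (c*e + d*g) (c*f + d*h)"

fun mat2_transpose :: "mat2 \<Rightarrow> mat2" where
  "mat2_transpose (Mat2 a b c d) = Mat2 a c b d"

fun mat2_det :: "mat2 \<Rightarrow> int" where
  "mat2_det (Mat2 a b c d) = a*d - b*c"

definition mat2_one :: mat2 where
  "mat2_one = Mat2 1 0 0 1"

lemma mat2_mult_assoc: "mat2_mult (mat2_mult A B) C = mat2_mult A (mat2_mult B C)"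
  by (cases A; cases B; cases C) (simp add: algebra_simps)

lemma mat2_mult_one [simp]: "mat2_mult mat2_one A = A" "mat2_mult A mat2_one = A"
  by (cases A; simp add: mat2_one_def)+

lemma mat2_transpose_mult:
  "mat2_transpose (mat2_mult A B) = mat2_mult (mat2_transpose B) (mat2_transpose A)"
  by (cases A; cases B) (simp add: algebra_simps)

lemma mat2_transpose_transpose [simp]: "mat2_transpose (mat2_transpose A) = A"
  by (cases A) simp

lemma mat2_det_mult: "mat2_det (mat2_mult A B) = mat2_det A * mat2_det B"
  by (cases A; cases B) (simp add: algebra_simps)

fun cf_matrix :: "int list \<Rightarrow> mat2" where
  "cf_matrix [] = mat2_one"
| "cf_matrix (w # ws) = mat2_mult (Mat2 w 1 1 0) (cf_matrix ws)"

lemma cf_matrix_append: "cf_matrix (ws @ vs) = mat2_mult (cf_matrix ws) (cf_matrix vs)"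
  by (induction ws) (simp_all add: mat2_mult_assoc)

lemma cf_matrix_rev: "cf_matrix (rev ws) = mat2_transpose (cf_matrix ws)"
  by (induction ws) (simp_all add: cf_matrix_append mat2_transpose_mult mat2_one_def)

lemma mat2_det_cf_matrix: "mat2_det (cf_matrix ws) = (-1) ^ length ws"
  by (induction ws) (simp_all add: mat2_det_mult mat2_one_def)

definition cfq_prev :: "(nat \<Rightarrow> nat) \<Rightarrow> nat \<Rightarrow> nat" where
  "cfq_prev a n = (if n = 0 then 0 else cfq a (n - 1))"

definition cfp_prev :: "(nat \<Rightarrow> nat) \<Rightarrow> nat \<Rightarrow> nat" where
  "cfp_prev a n = (if n = 0 then 1 else cfp a (n - 1))"

lemma cfq_Suc: "cfq a (Suc n) = a (Suc n) * cfq a n + cfq_prev a n"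
  by (cases n) (simp_all add: cfq_prev_def)

lemma cfp_Suc: "cfp a (Suc n) = a (Suc n) * cfp a n + cfp_prev a n"
  by (cases n) (simp_all add: cfp_prev_def)

lemma cf_matrix_convergents:
  "cf_matrix (map (\<lambda>i. int (a i)) [1..<Suc n]) =
     Mat2 (cfq a n) (cfq_prev a n) (cfp a n) (cfp_prev a n)"
proof (induction n)
  case 0
  then show ?case by (simp add: mat2_one_def cfq_prev_def cfp_prev_def)
next
  case (Suc n)
  have "cf_matrix (map (\<lambda>i. int (a i)) [1..<Suc (Suc n)]) =
      mat2_mult (cf_matrix (map (\<lambda>i. int (a i)) [1..<Suc n])) (Mat2 (a (Suc n)) 1 1 0)"
    by (simp add: cf_matrix_append mat2_one_def)
  then show ?case
    using Suc by (simp add: cfq_Suc cfp_Suc cfq_prev_def cfp_prev_def algebra_simps)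
qed

lemma cf_matrix_begins_with:
  assumes "begins_with a ws"
  shows "cf_matrix (map int ws) =
     Mat2 (cfq a (length ws)) (cfq_prev a (length ws)) (cfp a (length ws)) (cfp_prev a (length ws))"
proof -
  have prefix: "map a [1..<Suc (length ws)] = ws"
    using assms unfolding begins_with_def by (intro nth_equalityI) (simp_all del: upt_Suc)
  have "map (\<lambda>i. int (a i)) [1..<Suc (length ws)] = map int ws"
    using arg_cong[OF prefix, of "map int"] by (simp del: upt_Suc add: comp_def)
  then show ?thesis
    using cf_matrix_convergents[of a "length ws"] by simp
qed

lemma cf_det_Suc:
  "int (cfq a (Suc n)) * int (cfp a n) - int (cfq a n) * int (cfp a (Suc n)) = (-1) ^ Suc n"
proof -
  have "mat2_det (cf_matrix (map (\<lambda>i. int (a i)) [1..<Suc (Suc n)])) = (-1) ^ Suc n"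
    by (simp only: mat2_det_cf_matrix length_map length_upt) simp
  then show ?thesis
    by (simp only: cf_matrix_convergents mat2_det.simps) (simp add: cfq_prev_def cfp_prev_def)
qed

lemma begins_with_append_left: "begins_with a (ws @ vs) \<Longrightarrow> begins_with a ws"
  unfolding begins_with_def by (auto simp: nth_append)

lemma mat2_transpose_conj_symmetric:
  assumes "mat2_transpose S = S"
  shows "mat2_transpose (mat2_mult (mat2_mult M S) (mat2_transpose M)) =
           mat2_mult (mat2_mult M S) (mat2_transpose M)"
  using assms by (simp add: mat2_transpose_mult mat2_mult_assoc)

text \<open>The off-diagonal entries of the symmetric matrix \<open>M\<^sub>N M\<^sub>n\<^sup>T = M\<^sub>n P P\<^sup>T M\<^sub>n\<^sup>T\<close>.\<close>
lemma palindrome_convergents_symmetric: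
  assumes pal: "begins_with a (V @ U @ rev U)"
    and n: "n = length V" and N: "N = length V + 2 * length U"
  shows "cfq a N * cfp a n + cfq_prev a N * cfp_prev a n =
         cfp a N * cfq a n + cfp_prev a N * cfq_prev a n"
proof -
  define P Mn MN where "P = cf_matrix (map int U)" and "Mn = cf_matrix (map int V)"
    and "MN = cf_matrix (map int (V @ U @ rev U))"
  have S: "mat2_transpose (mat2_mult P (mat2_transpose P)) = mat2_mult P (mat2_transpose P)"
    by (simp add: mat2_transpose_mult)
  have MN: "MN = mat2_mult Mn (mat2_mult P (mat2_transpose P))"
    unfolding MN_def Mn_def P_def by (simp add: cf_matrix_append cf_matrix_rev flip: rev_map)
  have symmetric: "mat2_transpose (mat2_mult MN (mat2_transpose Mn)) = mat2_mult MN (mat2_transpose Mn)"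
    unfolding MN by (rule mat2_transpose_conj_symmetric[OF S])
  obtain w x y z where A: "mat2_mult MN (mat2_transpose Mn) = Mat2 w x y z"
    by (metis mat2.exhaust)
  have "x = y"
    using symmetric unfolding A by (metis mat2.inject mat2_transpose.simps)
  moreover have "Mn = Mat2 (cfq a n) (cfq_prev a n) (cfp a n) (cfp_prev a n)"
    unfolding Mn_def n using cf_matrix_begins_with[OF begins_with_append_left[OF pal]] by simp
  moreover have "MN = Mat2 (cfq a N) (cfq_prev a N) (cfp a N) (cfp_prev a N)"
    unfolding MN_def N using cf_matrix_begins_with[OF pal] by (simp add: mult_2)
  ultimately have "int (cfq a N * cfp a n + cfq_prev a N * cfp_prev a n) =
      int (cfp a N * cfq a n + cfp_prev a N * cfq_prev a n)"
    using A unfolding mat2_transpose.simps mat2_mult.simps mat2.inject by simp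
  then show ?thesis
    by (simp only: of_nat_eq_iff)
qed

section \<open>Convergents\<close>

locale pos_partial_quotients =
  fixes a :: "nat \<Rightarrow> nat"
  assumes partial_quotient_pos: "n \<ge> 1 \<Longrightarrow> a n > 0"
begin

lemma cfq_le_Suc: "cfq a n \<le> cfq a (Suc n)"
proof -
  have "cfq a n \<le> a (Suc n) * cfq a n"
    using partial_quotient_pos[of "Suc n"] by simp
  then show ?thesis unfolding cfq_Suc by linarith
qed

lemma cfq_mono: "m \<le> n \<Longrightarrow> cfq a m \<le> cfq a n"
  by (induction n rule: dec_induct) (auto intro: order.trans cfq_le_Suc)

lemma cfq_pos: "cfq a n \<ge> 1"
  using cfq_mono[of 0 n] by simp

lemma cfq_prev_le: "cfq_prev a n \<le> cfq a n"
  by (cases n) (simp_all add: cfq_prev_def cfq_le_Suc)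

lemma cfp_le_cfq: "cfp a n \<le> cfq a n"
proof (induction n rule: less_induct)
  case (less n)
  consider "n = 0" | "n = 1" | k where "n = Suc (Suc k)"
    by (metis One_nat_def not0_implies_Suc)
  then show ?case
  proof cases
    case 2
    then show ?thesis using partial_quotient_pos[of 1] by simp
  next
    case 3
    then show ?thesis
      using less[of k] less[of "Suc k"] by (simp add: cfp.simps(3) cfq.simps(3) add_mono)
  qed simp
qed

lemma cfp_prev_le: "cfp_prev a n \<le> cfq a n"
  by (cases n) (auto simp: cfp_prev_def intro: order.trans[OF cfp_le_cfq cfq_le_Suc])

lemma cfq_ge_power_2: "2 ^ (n div 2) \<le> cfq a n"
proof (induction n rule: less_induct)
  case (less n)
  show ?case
  proof (cases "n < 2")
    case True
    then show ?thesis using cfq_pos[of n] by (cases n) auto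
  next
    case False
    then obtain k where n: "n = Suc (Suc k)"
      by (metis add_2_eq_Suc le_add_diff_inverse not_less)
    have "cfq a (Suc k) \<le> a n * cfq a (Suc k)"
      using partial_quotient_pos[of n] n by simp
    moreover have "cfq a n = a n * cfq a (Suc k) + cfq a k"
      using n by (simp add: cfq.simps(3))
    ultimately have "2 * cfq a k \<le> cfq a n"
      using cfq_le_Suc[of k] by linarith
    then show ?thesis
      using less[of k] n by simp
  qed
qed

lemma length_lt_cfq: "u < cfq a (n + 2 * u)"
proof -
  have "u < 2 ^ u"
    by (rule less_exp)
  also have "\<dots> \<le> 2 ^ ((n + 2 * u) div 2)"
    by (intro power_increasing) auto
  also have "\<dots> \<le> cfq a (n + 2 * u)"
    by (rule cfq_ge_power_2)
  finally show ?thesis .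
qed

abbreviation convergent :: "nat \<Rightarrow> real" where
  "convergent n \<equiv> real (cfp a n) / real (cfq a n)"

lemma convergent_Suc_diff:
  "convergent (Suc n) - convergent n = (-1) ^ n / (real (cfq a n) * real (cfq a (Suc n)))"
proof -
  have "real (cfq a (Suc n)) * real (cfp a n) - real (cfq a n) * real (cfp a (Suc n)) = (-1) ^ Suc n"
    using arg_cong[OF cf_det_Suc, of real_of_int] by simp
  then show ?thesis
    using cfq_pos[of n] cfq_pos[of "Suc n"] by (simp add: field_simps)
qed

lemma convergents_alternate: "(-1) ^ n * (convergent (Suc (Suc n)) - convergent n) \<ge> 0"
proof -
  define d0 d1 where "d0 = real (cfq a n) * real (cfq a (Suc n))"
    and "d1 = real (cfq a (Suc n)) * real (cfq a (Suc (Suc n)))"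
  have "convergent (Suc (Suc n)) - convergent n =
      (convergent (Suc (Suc n)) - convergent (Suc n)) + (convergent (Suc n) - convergent n)"
    by simp
  also have "\<dots> = (-1) ^ n * (1 / d0 - 1 / d1)"
    unfolding convergent_Suc_diff d0_def d1_def by (simp add: right_diff_distrib)
  finally have "(-1) ^ n * (convergent (Suc (Suc n)) - convergent n) = 1 / d0 - 1 / d1"
    by simp
  moreover have "0 < d0" "d0 \<le> d1"
    unfolding d0_def d1_def using cfq_pos[of n] cfq_pos[of "Suc n"] cfq_mono[of n "Suc (Suc n)"]
    by (simp_all add: mult.commute)
  ultimately show ?thesis
    by (simp add: frac_le)
qed

lemma convergent_dist_le_Suc_diff:
  assumes lim: "convergent \<longlonglongrightarrow> \<alpha>"
  shows "\<bar>\<alpha> - convergent n\<bar> \<le> \<bar>convergent (Suc n) - convergent n\<bar>"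
proof -
  have even_le: "convergent (2 * k) \<le> \<alpha>" for k
  proof (rule incseq_le[of "\<lambda>k. convergent (2 * k)"])
    have "convergent (2 * k) \<le> convergent (2 * Suc k)" for k
      using convergents_alternate[of "2 * k"] by simp
    then show "incseq (\<lambda>k. convergent (2 * k))"
      by (intro incseq_SucI)
    show "(\<lambda>k. convergent (2 * k)) \<longlonglongrightarrow> \<alpha>"
      using LIMSEQ_subseq_LIMSEQ[OF lim, of "\<lambda>k. 2 * k"] by (simp add: strict_mono_def o_def)
  qed
  have odd_ge: "\<alpha> \<le> convergent (Suc (2 * k))" for k
  proof (rule decseq_ge[of "\<lambda>k. convergent (Suc (2 * k))"])
    have "convergent (Suc (2 * Suc k)) \<le> convergent (Suc (2 * k))" for k
      using convergents_alternate[of "Suc (2 * k)"] by simp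
    then show "decseq (\<lambda>k. convergent (Suc (2 * k)))"
      by (intro decseq_SucI)
    show "(\<lambda>k. convergent (Suc (2 * k))) \<longlonglongrightarrow> \<alpha>"
      using LIMSEQ_subseq_LIMSEQ[OF lim, of "\<lambda>k. Suc (2 * k)"] by (simp add: strict_mono_def o_def)
  qed
  show ?thesis
  proof (cases "even n")
    case True
    then obtain k where "n = 2 * k" by blast
    then show ?thesis using even_le[of k] odd_ge[of k] by simp
  next
    case False
    then obtain k where "n = Suc (2 * k)" by (metis oddE Suc_eq_plus1)
    then show ?thesis using even_le[of "Suc k"] odd_ge[of k] by simp
  qed
qed

lemma convergent_error:
  assumes lim: "convergent \<longlonglongrightarrow> \<alpha>"
  shows "\<bar>real (cfq a n) * \<alpha> - real (cfp a n)\<bar> \<le> 1 / real (cfq a (Suc n))"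
proof -
  have q_pos: "real (cfq a n) > 0"
    using cfq_pos[of n] by simp
  have "\<bar>real (cfq a n) * \<alpha> - real (cfp a n)\<bar> = real (cfq a n) * \<bar>\<alpha> - convergent n\<bar>"
    using q_pos by (simp add: abs_mult[symmetric] field_simps)
  also have "\<dots> \<le> real (cfq a n) * \<bar>convergent (Suc n) - convergent n\<bar>"
    using convergent_dist_le_Suc_diff[OF lim] q_pos by simp
  also have "\<dots> = 1 / real (cfq a (Suc n))"
    using q_pos by (simp add: convergent_Suc_diff abs_mult)
  finally show ?thesis .
qed

lemma convergent_error_le:
  assumes "convergent \<longlonglongrightarrow> \<alpha>"
  shows "\<bar>real (cfq a n) * \<alpha> - real (cfp a n)\<bar> \<le> 1 / real (cfq a n)"
proof -
  have "1 / real (cfq a (Suc n)) \<le> 1 / real (cfq a n)"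
    using cfq_pos[of n] cfq_le_Suc[of n] by (simp add: frac_le)
  then show ?thesis
    using convergent_error[OF assms, of n] by linarith
qed

lemma convergent_prev_error_le:
  assumes "convergent \<longlonglongrightarrow> \<alpha>"
  shows "\<bar>real (cfq_prev a n) * \<alpha> - real (cfp_prev a n)\<bar> \<le> 1 / real (cfq a n)"
  using convergent_error[OF assms, of "n - 1"] by (cases n) (simp_all add: cfq_prev_def cfp_prev_def)

end

section \<open>Simultaneous approximation from a palindrome\<close>

lemma approximation_lincomb_le:
  fixes \<alpha> q q' p p' s s' w e :: real
  assumes "\<bar>q * \<alpha> - p\<bar> \<le> e" "\<bar>q' * \<alpha> - p'\<bar> \<le> e" "0 \<le> s" "s \<le> w" "0 \<le> s'" "s' \<le> w"
  shows "\<bar>\<alpha> * (s * q + s' * q') - (s * p + s' * p')\<bar> \<le> 2 * w * e"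
proof -
  have "\<bar>\<alpha> * (s * q + s' * q') - (s * p + s' * p')\<bar> = \<bar>s * (q * \<alpha> - p) + s' * (q' * \<alpha> - p')\<bar>"
    by (simp add: algebra_simps)
  also have "\<dots> \<le> s * \<bar>q * \<alpha> - p\<bar> + s' * \<bar>q' * \<alpha> - p'\<bar>"
    using assms abs_triangle_ineq[of "s * (q * \<alpha> - p)" "s' * (q' * \<alpha> - p')"] by (simp add: abs_mult)
  also have "\<dots> \<le> w * e + w * e"
    using assms by (intro add_mono mult_mono) auto
  finally show ?thesis
    by (simp add: ac_simps)
qed

lemma dnint_nonneg: "dnint y \<ge> 0"
  unfolding dnint_def using frac_lt_1[of y] frac_ge_0[of y] by simp

lemma dnint_le_dist_int: "dnint y \<le> \<bar>y - of_int z\<bar>"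
proof (cases "z \<le> \<lfloor>y\<rfloor>")
  case True
  then have "frac y \<le> \<bar>y - of_int z\<bar>"
    unfolding frac_def using of_int_floor_le[of y] by (simp add: abs_if)
  then show ?thesis unfolding dnint_def by simp
next
  case False
  then have "1 - frac y \<le> \<bar>y - of_int z\<bar>"
    unfolding frac_def using floor_correct[of y] by (simp add: abs_if)
  then show ?thesis unfolding dnint_def by simp
qed

lemma dnint_nat_abs_le: "dnint (real (nat \<bar>k\<bar>) * y) \<le> \<bar>of_int k * y - of_int z\<bar>"
proof (cases "k \<ge> 0")
  case True
  then show ?thesis using dnint_le_dist_int[of "of_int k * y" z] by simp
next
  case False
  then have "real (nat \<bar>k\<bar>) * y = - (of_int k * y)" by simp
  then show ?thesis
    using dnint_le_dist_int[of "- (of_int k * y)" "- z"] by (simp add: abs_minus_commute)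
qed

lemma homography_simultaneous_approximation:
  fixes \<alpha> \<beta> A\<^sub>1\<^sub>1 A\<^sub>1\<^sub>2 A\<^sub>2\<^sub>2 E a b c d :: real
  assumes hom: "\<beta> * (c * \<alpha> + d) = a * \<alpha> + b"
    and approx: "\<bar>\<alpha> * A\<^sub>1\<^sub>1 - A\<^sub>1\<^sub>2\<bar> \<le> E" "\<bar>\<alpha> * A\<^sub>1\<^sub>2 - A\<^sub>2\<^sub>2\<bar> \<le> E"
  shows "\<bar>(d * A\<^sub>1\<^sub>1 + c * A\<^sub>1\<^sub>2) * \<alpha> - (d * A\<^sub>1\<^sub>2 + c * A\<^sub>2\<^sub>2)\<bar> \<le> (\<bar>c\<bar> + \<bar>d\<bar>) * E"
    and "\<bar>(d * A\<^sub>1\<^sub>1 + c * A\<^sub>1\<^sub>2) * \<beta> - (b * A\<^sub>1\<^sub>1 + a * A\<^sub>1\<^sub>2)\<bar> \<le> (\<bar>a\<bar> + \<bar>c\<bar> * \<bar>\<beta>\<bar>) * E"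
    and "\<bar>A\<^sub>1\<^sub>1\<bar> * \<bar>c * \<alpha> + d\<bar> - \<bar>c\<bar> * E \<le> \<bar>d * A\<^sub>1\<^sub>1 + c * A\<^sub>1\<^sub>2\<bar>"
proof -
  define e f where "e = \<alpha> * A\<^sub>1\<^sub>1 - A\<^sub>1\<^sub>2" and "f = \<alpha> * A\<^sub>1\<^sub>2 - A\<^sub>2\<^sub>2"
  have ef: "\<bar>e\<bar> \<le> E" "\<bar>f\<bar> \<le> E"
    using approx unfolding e_def f_def by simp_all
  have Q: "d * A\<^sub>1\<^sub>1 + c * A\<^sub>1\<^sub>2 = A\<^sub>1\<^sub>1 * (c * \<alpha> + d) - c * e"
    unfolding e_def by (simp add: algebra_simps)
  have "(d * A\<^sub>1\<^sub>1 + c * A\<^sub>1\<^sub>2) * \<alpha> - (d * A\<^sub>1\<^sub>2 + c * A\<^sub>2\<^sub>2) = d * e + c * f"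
    unfolding e_def f_def by (simp add: algebra_simps)
  also have "\<bar>\<dots>\<bar> \<le> \<bar>d\<bar> * \<bar>e\<bar> + \<bar>c\<bar> * \<bar>f\<bar>"
    by (metis abs_mult abs_triangle_ineq)
  also have "\<dots> \<le> (\<bar>c\<bar> + \<bar>d\<bar>) * E"
    using ef mult_left_mono[OF ef(1), of "\<bar>d\<bar>"] mult_left_mono[OF ef(2), of "\<bar>c\<bar>"]
    by (simp add: algebra_simps)
  finally show "\<bar>(d * A\<^sub>1\<^sub>1 + c * A\<^sub>1\<^sub>2) * \<alpha> - (d * A\<^sub>1\<^sub>2 + c * A\<^sub>2\<^sub>2)\<bar> \<le> (\<bar>c\<bar> + \<bar>d\<bar>) * E" .
  have "(d * A\<^sub>1\<^sub>1 + c * A\<^sub>1\<^sub>2) * \<beta> - (b * A\<^sub>1\<^sub>1 + a * A\<^sub>1\<^sub>2) = A\<^sub>1\<^sub>1 * (\<beta> * (c * \<alpha> + d)) - c * e * \<beta> - (b * A\<^sub>1\<^sub>1 + a * A\<^sub>1\<^sub>2)"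
    unfolding Q by (simp add: algebra_simps)
  also have "\<dots> = e * (a - c * \<beta>)"
    unfolding hom e_def by (simp add: algebra_simps)
  also have "\<bar>\<dots>\<bar> \<le> E * (\<bar>a\<bar> + \<bar>c\<bar> * \<bar>\<beta>\<bar>)"
    unfolding abs_mult using ef(1) abs_triangle_ineq4[of a "c * \<beta>"]
    by (intro mult_mono) (auto simp: abs_mult)
  finally show "\<bar>(d * A\<^sub>1\<^sub>1 + c * A\<^sub>1\<^sub>2) * \<beta> - (b * A\<^sub>1\<^sub>1 + a * A\<^sub>1\<^sub>2)\<bar> \<le> (\<bar>a\<bar> + \<bar>c\<bar> * \<bar>\<beta>\<bar>) * E"
    by (simp only: mult.commute)
  have "\<bar>c * e\<bar> \<le> \<bar>c\<bar> * E"
    using ef(1) unfolding abs_mult by (simp add: mult_left_mono)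
  then show "\<bar>A\<^sub>1\<^sub>1\<bar> * \<bar>c * \<alpha> + d\<bar> - \<bar>c\<bar> * E \<le> \<bar>d * A\<^sub>1\<^sub>1 + c * A\<^sub>1\<^sub>2\<bar>"
    unfolding Q using abs_triangle_ineq2[of "A\<^sub>1\<^sub>1 * (c * \<alpha> + d)" "c * e"] by (simp add: abs_mult)
qed

lemma homography_integer_approximation:
  fixes \<alpha> \<beta> qN qn :: real and A\<^sub>1\<^sub>1 A\<^sub>1\<^sub>2 A\<^sub>2\<^sub>2 a b c d :: int
  assumes hom: "\<beta> * (c * \<alpha> + d) = a * \<alpha> + b"
    and q: "1 \<le> qn" "qn \<le> qN"
    and A: "qN \<le> A\<^sub>1\<^sub>1" "A\<^sub>1\<^sub>1 \<le> 2 * qN * qn" "\<bar>A\<^sub>1\<^sub>2\<bar> \<le> 2 * qN * qn"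
    and approx: "\<bar>\<alpha> * A\<^sub>1\<^sub>1 - A\<^sub>1\<^sub>2\<bar> \<le> 2 * qn / qN" "\<bar>\<alpha> * A\<^sub>1\<^sub>2 - A\<^sub>2\<^sub>2\<bar> \<le> 2 * qn / qN"
    and large: "2 * \<bar>c\<bar> < qN * \<bar>c * \<alpha> + d\<bar>"
  obtains Q Z R :: int where "Q \<noteq> 0" "\<bar>Q\<bar> \<le> (\<bar>c\<bar> + \<bar>d\<bar>) * (2 * qN * qn)"
    "\<bar>Q * \<alpha> - Z\<bar> \<le> (\<bar>c\<bar> + \<bar>d\<bar>) * (2 * qn / qN)"
    "\<bar>Q * \<beta> - R\<bar> \<le> (\<bar>a\<bar> + \<bar>c\<bar> * \<bar>\<beta>\<bar>) * (2 * qn / qN)"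
proof -
  define Q where "Q = d * A\<^sub>1\<^sub>1 + c * A\<^sub>1\<^sub>2"
  note hom_approx = homography_simultaneous_approximation[OF hom approx]
  have "2 * qn / qN \<le> 2"
    using q by (simp add: divide_le_eq)
  then have "\<bar>real_of_int c\<bar> * (2 * qn / qN) \<le> \<bar>real_of_int c\<bar> * 2"
    by (intro mult_left_mono) auto
  moreover have "qN * \<bar>c * \<alpha> + d\<bar> \<le> \<bar>real_of_int A\<^sub>1\<^sub>1\<bar> * \<bar>c * \<alpha> + d\<bar>"
    using A(1) by (intro mult_right_mono) auto
  ultimately have "0 < \<bar>real_of_int Q\<bar>"
    using large hom_approx(3) unfolding Q_def of_int_abs of_int_add of_int_mult by linarith
  show ?thesis
  proof (rule that[of Q "d * A\<^sub>1\<^sub>2 + c * A\<^sub>2\<^sub>2" "b * A\<^sub>1\<^sub>1 + a * A\<^sub>1\<^sub>2"])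
    show "Q \<noteq> 0"
      using \<open>0 < \<bar>real_of_int Q\<bar>\<close> by auto
    have "\<bar>real_of_int Q\<bar> \<le> \<bar>real_of_int d\<bar> * \<bar>real_of_int A\<^sub>1\<^sub>1\<bar> + \<bar>real_of_int c\<bar> * \<bar>real_of_int A\<^sub>1\<^sub>2\<bar>"
      unfolding Q_def by (metis abs_mult abs_triangle_ineq of_int_add of_int_mult)
    also have "\<dots> \<le> \<bar>real_of_int d\<bar> * (2 * qN * qn) + \<bar>real_of_int c\<bar> * (2 * qN * qn)"
      using A q by (intro add_mono mult_left_mono) auto
    finally show "\<bar>Q\<bar> \<le> (\<bar>c\<bar> + \<bar>d\<bar>) * (2 * qN * qn)"
      by (simp add: algebra_simps)
  qed (use hom_approx(1,2) in \<open>simp_all add: Q_def\<close>)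
qed

lemma triple_product_le_of_simultaneous_approximation:
  fixes \<alpha> \<beta> qN qn :: real and A\<^sub>1\<^sub>1 A\<^sub>1\<^sub>2 A\<^sub>2\<^sub>2 a b c d :: int
  assumes hom: "\<beta> * (c * \<alpha> + d) = a * \<alpha> + b"
    and q: "1 \<le> qn" "qn \<le> qN"
    and A: "qN \<le> A\<^sub>1\<^sub>1" "A\<^sub>1\<^sub>1 \<le> 2 * qN * qn" "\<bar>A\<^sub>1\<^sub>2\<bar> \<le> 2 * qN * qn"
    and approx: "\<bar>\<alpha> * A\<^sub>1\<^sub>1 - A\<^sub>1\<^sub>2\<bar> \<le> 2 * qn / qN" "\<bar>\<alpha> * A\<^sub>1\<^sub>2 - A\<^sub>2\<^sub>2\<bar> \<le> 2 * qn / qN"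
    and large: "2 * \<bar>c\<bar> < qN * \<bar>c * \<alpha> + d\<bar>"
  shows "\<exists>q\<ge>1. real q * dnint (real q * \<alpha>) * dnint (real q * \<beta>) \<le>
           8 * (\<bar>c\<bar> + \<bar>d\<bar>)\<^sup>2 * (\<bar>a\<bar> + \<bar>c\<bar> * \<bar>\<beta>\<bar>) * (qn ^ 3 / qN)"
proof -
  obtain Q Z R :: int where Q: "Q \<noteq> 0" "\<bar>Q\<bar> \<le> (\<bar>c\<bar> + \<bar>d\<bar>) * (2 * qN * qn)"
    "\<bar>Q * \<alpha> - Z\<bar> \<le> (\<bar>c\<bar> + \<bar>d\<bar>) * (2 * qn / qN)"
    "\<bar>Q * \<beta> - R\<bar> \<le> (\<bar>a\<bar> + \<bar>c\<bar> * \<bar>\<beta>\<bar>) * (2 * qn / qN)"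
    using homography_integer_approximation[OF hom q A approx large] by blast
  have "real (nat \<bar>Q\<bar>) * dnint (real (nat \<bar>Q\<bar>) * \<alpha>) * dnint (real (nat \<bar>Q\<bar>) * \<beta>) \<le>
      ((\<bar>c\<bar> + \<bar>d\<bar>) * (2 * qN * qn)) * ((\<bar>c\<bar> + \<bar>d\<bar>) * (2 * qn / qN)) * ((\<bar>a\<bar> + \<bar>c\<bar> * \<bar>\<beta>\<bar>) * (2 * qn / qN))"
    using Q q order.trans[OF dnint_nonneg dnint_nat_abs_le]
      dnint_nat_abs_le[of Q \<alpha> Z] dnint_nat_abs_le[of Q \<beta> R]
    by (intro mult_mono) (auto intro: dnint_nonneg)
  also have "\<dots> = 8 * (\<bar>c\<bar> + \<bar>d\<bar>)\<^sup>2 * (\<bar>a\<bar> + \<bar>c\<bar> * \<bar>\<beta>\<bar>) * (qn ^ 3 / qN)"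
  proof -
    have "(P * (2 * qN * qn)) * (P * (2 * qn / qN)) * (S * (2 * qn / qN)) = 8 * P\<^sup>2 * S * (qn ^ 3 / qN)"
      for P S :: real
      using q by (simp add: field_simps power2_eq_square power3_eq_cube)
    from this[of "of_int (\<bar>c\<bar> + \<bar>d\<bar>)" "of_int \<bar>a\<bar> + of_int \<bar>c\<bar> * \<bar>\<beta>\<bar>"] show ?thesis
      by simp
  qed
  finally show ?thesis
    using \<open>Q \<noteq> 0\<close> by (intro exI[of _ "nat \<bar>Q\<bar>"]) (simp add: Suc_le_eq)
qed

lemma INF_eq_0_if_eventually_le_null:
  fixes f g :: "nat \<Rightarrow> real"
  assumes nonneg: "\<And>q. 0 \<le> f q" and g: "g \<longlonglongrightarrow> 0"
    and le: "eventually (\<lambda>k. \<exists>q\<ge>1. f q \<le> g k) sequentially"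
  shows "(INF q\<in>{1..}. f q) = 0"
proof (rule antisym)
  show "(INF q\<in>{1..}. f q) \<le> 0"
  proof (rule field_le_epsilon)
    fix \<delta> :: real
    assume "0 < \<delta>"
    then have "eventually (\<lambda>k. g k < \<delta>) sequentially"
      using g by (simp add: order_tendstoD(2))
    then obtain q where "q \<ge> 1" "f q < \<delta>"
      using eventually_conj[OF le] eventually_happens[of _ sequentially] by fastforce
    moreover have "bdd_below (f ` {1..})"
      using nonneg by (intro bdd_belowI[of _ 0]) auto
    ultimately show "(INF q\<in>{1..}. f q) \<le> 0 + \<delta>"
      by (intro cINF_lower2[of f "{1..}" q]) auto
  qed
  show "0 \<le> (INF q\<in>{1..}. f q)"
    using nonneg by (intro cINF_greatest) auto
qed

context pos_partial_quotients
begin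

text \<open>The rows of the symmetric matrix \<open>M\<^sub>N M\<^sub>n\<^sup>T\<close> are integer vectors \<open>(A\<^sub>1\<^sub>1, A\<^sub>1\<^sub>2)\<close> and \<open>(A\<^sub>1\<^sub>2, A\<^sub>2\<^sub>2)\<close> on which \<open>(\<alpha>, -1)\<close> is small.\<close>
lemma palindrome_simultaneous_approximation:
  fixes \<alpha> :: real
  assumes lim: "convergent \<longlonglongrightarrow> \<alpha>" and pal: "begins_with a (V @ U @ rev U)"
    and n: "n = length V" and N: "N = length V + 2 * length U"
  obtains A\<^sub>1\<^sub>1 A\<^sub>1\<^sub>2 A\<^sub>2\<^sub>2 :: int where
    "real (cfq a N) \<le> A\<^sub>1\<^sub>1" "A\<^sub>1\<^sub>1 \<le> 2 * real (cfq a N) * real (cfq a n)"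
    "\<bar>A\<^sub>1\<^sub>2\<bar> \<le> 2 * real (cfq a N) * real (cfq a n)"
    "\<bar>\<alpha> * A\<^sub>1\<^sub>1 - A\<^sub>1\<^sub>2\<bar> \<le> 2 * real (cfq a n) / real (cfq a N)"
    "\<bar>\<alpha> * A\<^sub>1\<^sub>2 - A\<^sub>2\<^sub>2\<bar> \<le> 2 * real (cfq a n) / real (cfq a N)"
proof -
  define qN qN' pN pN' where "qN = real (cfq a N)" and "qN' = real (cfq_prev a N)"
    and "pN = real (cfp a N)" and "pN' = real (cfp_prev a N)"
  define qn qn' pn pn' where "qn = real (cfq a n)" and "qn' = real (cfq_prev a n)"
    and "pn = real (cfp a n)" and "pn' = real (cfp_prev a n)"
  define A\<^sub>1\<^sub>1 A\<^sub>1\<^sub>2 A\<^sub>2\<^sub>2 where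
    "A\<^sub>1\<^sub>1 = int (cfq a N * cfq a n + cfq_prev a N * cfq_prev a n)"
    and "A\<^sub>1\<^sub>2 = int (cfq a N * cfp a n + cfq_prev a N * cfp_prev a n)"
    and "A\<^sub>2\<^sub>2 = int (cfp a N * cfp a n + cfp_prev a N * cfp_prev a n)"
  have A\<^sub>1\<^sub>1: "A\<^sub>1\<^sub>1 = qn * qN + qn' * qN'" and A\<^sub>2\<^sub>2: "A\<^sub>2\<^sub>2 = pn * pN + pn' * pN'"
    and A\<^sub>1\<^sub>2: "A\<^sub>1\<^sub>2 = pn * qN + pn' * qN'" and A\<^sub>1\<^sub>2_sym: "A\<^sub>1\<^sub>2 = qn * pN + qn' * pN'"
    using palindrome_convergents_symmetric[OF pal n N]
    unfolding A\<^sub>1\<^sub>1_def A\<^sub>1\<^sub>2_def A\<^sub>2\<^sub>2_def qN_def qN'_def pN_def pN'_def qn_def qn'_def pn_def pn'_def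
    by (simp_all add: ac_simps flip: of_nat_mult of_nat_add)
  have le: "1 \<le> qN" "qN' \<le> qN" "1 \<le> qn" "qn' \<le> qn" "pn \<le> qn" "pn' \<le> qn"
    and nonneg: "0 \<le> qN'" "0 \<le> qn'" "0 \<le> pn" "0 \<le> pn'"
    unfolding qN_def qN'_def qn_def qn'_def pn_def pn'_def
    using cfq_pos cfq_prev_le cfp_le_cfq cfp_prev_le by simp_all
  have err: "\<bar>qN * \<alpha> - pN\<bar> \<le> 1 / qN" "\<bar>qN' * \<alpha> - pN'\<bar> \<le> 1 / qN"
    unfolding qN_def qN'_def pN_def pN'_def
    using convergent_error_le[OF lim] convergent_prev_error_le[OF lim] by blast+
  show ?thesis
  proof (rule that[of A\<^sub>1\<^sub>1 A\<^sub>1\<^sub>2 A\<^sub>2\<^sub>2, folded qN_def qn_def])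
    have "qN \<le> qn * qN" "qn' * qN' \<le> qn * qN" "pn * qN \<le> qn * qN" "pn' * qN' \<le> qn * qN"
      "0 \<le> qn' * qN'" "0 \<le> pn * qN" "0 \<le> pn' * qN'"
      using le nonneg by (auto intro: mult_mono)
    then show "qN \<le> A\<^sub>1\<^sub>1" "A\<^sub>1\<^sub>1 \<le> 2 * qN * qn" "\<bar>A\<^sub>1\<^sub>2\<bar> \<le> 2 * qN * qn"
      unfolding of_int_abs A\<^sub>1\<^sub>1 A\<^sub>1\<^sub>2 abs_le_iff using mult.commute[of qN qn] by linarith+
    show "\<bar>\<alpha> * A\<^sub>1\<^sub>1 - A\<^sub>1\<^sub>2\<bar> \<le> 2 * qn / qN"
      unfolding A\<^sub>1\<^sub>1 A\<^sub>1\<^sub>2_sym using approximation_lincomb_le[OF err, of qn qn qn'] le nonneg by simp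
    show "\<bar>\<alpha> * A\<^sub>1\<^sub>2 - A\<^sub>2\<^sub>2\<bar> \<le> 2 * qn / qN"
      unfolding A\<^sub>1\<^sub>2 A\<^sub>2\<^sub>2 using approximation_lincomb_le[OF err, of pn qn pn'] le nonneg by simp
  qed
qed

lemma palindrome_triple_product_le:
  fixes \<alpha> \<beta> :: real and a' b' c' d' :: int
  assumes lim: "convergent \<longlonglongrightarrow> \<alpha>" and hom: "\<beta> * (c' * \<alpha> + d') = a' * \<alpha> + b'"
    and pal: "begins_with a (V @ U @ rev U)"
    and large: "2 * \<bar>c'\<bar> < real (cfq a (length V + 2 * length U)) * \<bar>c' * \<alpha> + d'\<bar>"
  shows "\<exists>q\<ge>1. real q * dnint (real q * \<alpha>) * dnint (real q * \<beta>) \<le>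
           8 * (\<bar>c'\<bar> + \<bar>d'\<bar>)\<^sup>2 * (\<bar>a'\<bar> + \<bar>c'\<bar> * \<bar>\<beta>\<bar>) *
           (real (cfq a (length V)) ^ 3 / real (cfq a (length V + 2 * length U)))"
proof -
  obtain A\<^sub>1\<^sub>1 A\<^sub>1\<^sub>2 A\<^sub>2\<^sub>2 :: int where A:
    "real (cfq a (length V + 2 * length U)) \<le> A\<^sub>1\<^sub>1"
    "A\<^sub>1\<^sub>1 \<le> 2 * real (cfq a (length V + 2 * length U)) * real (cfq a (length V))"
    "\<bar>A\<^sub>1\<^sub>2\<bar> \<le> 2 * real (cfq a (length V + 2 * length U)) * real (cfq a (length V))"
    "\<bar>\<alpha> * A\<^sub>1\<^sub>1 - A\<^sub>1\<^sub>2\<bar> \<le> 2 * real (cfq a (length V)) / real (cfq a (length V + 2 * length U))"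
    "\<bar>\<alpha> * A\<^sub>1\<^sub>2 - A\<^sub>2\<^sub>2\<bar> \<le> 2 * real (cfq a (length V)) / real (cfq a (length V + 2 * length U))"
    by (rule palindrome_simultaneous_approximation[OF lim pal refl refl])
  have q: "1 \<le> real (cfq a (length V))" "real (cfq a (length V)) \<le> real (cfq a (length V + 2 * length U))"
    using cfq_pos cfq_mono[of "length V"] by simp_all
  show ?thesis
    by (rule triple_product_le_of_simultaneous_approximation[OF hom q A large])
qed

end

section \<open>Growth of the denominators\<close>

lemma exists_rates_beyond_bounds:
  fixes M m x :: real
  assumes m: "1 < m" "m \<le> M" and x: "0 < x" "x > 3 / 2 * (ln M / ln m) - 1 / 2"
  obtains M' m' where "M < M'" "1 < m'" "m' < m" "(3 * ln M' - ln m') / x < 2 * ln m'"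
proof -
  define f where "f e = (3 * ln (M + e) - ln (m - e)) / x - 2 * ln (m - e)" for e
  have "3 * ln M / ln m < 2 * x + 1"
    using x by (simp add: field_simps)
  then have "3 * ln M - ln m < 2 * ln m * x"
    using m by (simp add: divide_less_eq algebra_simps)
  then have "f 0 < 0"
    unfolding f_def using x by (simp add: divide_less_eq)
  moreover have "(f \<longlongrightarrow> f 0) (at_right 0)"
    unfolding f_def using m x by (intro tendsto_intros) auto
  ultimately have "eventually (\<lambda>e. f e < 0) (at_right 0)"
    by (simp add: order_tendstoD(2))
  moreover have "eventually (\<lambda>e. e \<in> {0<..<m - 1}) (at_right (0::real))"
    using m by (intro eventually_at_right_real) simp
  ultimately have "eventually (\<lambda>e. f e < 0 \<and> e \<in> {0<..<m - 1}) (at_right 0)"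
    by (rule eventually_conj)
  then obtain e where "f e < 0" "e \<in> {0<..<m - 1}"
    using eventually_happens[of _ "at_right (0::real)"] by (auto simp: trivial_limit_at_right_real)
  then show ?thesis
    using that[of "M + e" "m - e"] unfolding f_def by simp
qed

lemma power_ratio_le_power:
  fixes x M m :: real and n u :: nat
  assumes x: "0 < x" "x * real n \<le> real u" and m: "1 < m" "m \<le> M"
  shows "M ^ (3 * n) / m ^ (n + 2 * u) \<le> exp ((3 * ln M - ln m) / x - 2 * ln m) ^ u"
proof -
  have "0 < ln m" "ln m \<le> ln M"
    using m by simp_all
  then have "0 \<le> 3 * ln M - ln m"
    by linarith
  then have "real n * (3 * ln M - ln m) \<le> real u / x * (3 * ln M - ln m)"
    using x by (intro mult_right_mono) (simp_all add: field_simps)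
  moreover have "real u * ((3 * ln M - ln m) / x - 2 * ln m) = real u / x * (3 * ln M - ln m) - 2 * real u * ln m"
    by (simp add: algebra_simps diff_divide_distrib)
  moreover have "real (3 * n) * ln M - real (n + 2 * u) * ln m = real n * (3 * ln M - ln m) - 2 * real u * ln m"
    by (simp add: algebra_simps)
  ultimately have "real (3 * n) * ln M - real (n + 2 * u) * ln m \<le> real u * ((3 * ln M - ln m) / x - 2 * ln m)"
    by linarith
  moreover have "M ^ (3 * n) / m ^ (n + 2 * u) = exp (real (3 * n) * ln M - real (n + 2 * u) * ln m)"
  proof -
    have pow_exp: "y ^ k = exp (real k * ln y)" if "0 < y" for y :: real and k :: nat
      using that by (simp add: powr_def flip: powr_realpow)
    have "0 < m" "0 < M"
      using m by simp_all
    then show ?thesis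
      by (simp only: pow_exp exp_diff)
  qed
  ultimately show ?thesis
    by (simp add: exp_of_nat_mult[symmetric])
qed

lemma cube_ratio_le_power:
  fixes x M m B qn qN :: real and n u :: nat
  assumes x: "0 < x" "x * real n \<le> real u" and m: "1 < m" "m \<le> M"
    and q: "0 \<le> qn" "qn \<le> B * M ^ n" "m ^ (n + 2 * u) \<le> qN"
  shows "qn ^ 3 / qN \<le> B ^ 3 * exp ((3 * ln M - ln m) / x - 2 * ln m) ^ u"
proof -
  have "0 \<le> B * M ^ n"
    using q by linarith
  moreover have "0 < M ^ n"
    using m by simp
  ultimately have "0 \<le> B"
    by (simp add: zero_le_mult_iff)
  have "qn ^ 3 \<le> B ^ 3 * M ^ (3 * n)"
    using power_mono[OF q(2), of 3] q(1) by (simp add: power_mult_distrib power_mult[symmetric] mult.commute)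
  then have "qn ^ 3 / qN \<le> B ^ 3 * M ^ (3 * n) / m ^ (n + 2 * u)"
    using q m \<open>0 \<le> B\<close> by (intro frac_le) simp_all
  also have "\<dots> = B ^ 3 * (M ^ (3 * n) / m ^ (n + 2 * u))"
    by simp
  also have "\<dots> \<le> B ^ 3 * exp ((3 * ln M - ln m) / x - 2 * ln m) ^ u"
    using power_ratio_le_power[OF x m] \<open>0 \<le> B\<close> by (intro mult_left_mono) auto
  finally show ?thesis .
qed

lemma filterlim_at_top_if_increasing_from_1:
  fixes f :: "nat \<Rightarrow> nat"
  assumes "\<forall>k\<ge>1. f k < f (Suc k)"
  shows "filterlim f at_top sequentially"
proof -
  have "k \<le> f (Suc k)" for k
  proof (induction k)
    case (Suc k)
    then show ?case using assms[rule_format, of "Suc k"] by simp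
  qed simp
  then have "Z \<le> f k" if "Suc Z \<le> k" for Z k
    using that by (metis Suc_le_D Suc_le_mono order.trans)
  then show ?thesis
    unfolding filterlim_at_top eventually_sequentially by blast
qed

context pos_partial_quotients
begin

lemma liminf_root_cfq_gt_1:
  assumes "liminf (\<lambda>l. ereal (real (cfq a l) powr (1 / real l))) = ereal m"
  shows "1 < m"
proof -
  have "eventually (\<lambda>l. ereal (2 powr (1/4)) \<le> ereal (real (cfq a l) powr (1 / real l))) sequentially"
    unfolding eventually_sequentially
  proof (intro exI allI impI)
    fix l :: nat
    assume l: "2 \<le> l"
    then have "real l / 4 \<le> real (l div 2)"
      by linarith
    then have "2 powr (real l / 4) \<le> 2 ^ (l div 2)"
      by (metis powr_mono powr_realpow one_le_numeral zero_less_numeral)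
    also have "\<dots> \<le> real (cfq a l)"
      using cfq_ge_power_2[of l] by (metis numeral_power_le_of_nat_cancel_iff)
    finally have "(2 powr (real l / 4)) powr (1 / real l) \<le> real (cfq a l) powr (1 / real l)"
      by (intro powr_mono2) auto
    then show "ereal (2 powr (1/4)) \<le> ereal (real (cfq a l) powr (1 / real l))"
      using l by (simp add: powr_powr)
  qed
  then have "2 powr (1/4) \<le> m"
    using assms Liminf_bounded by (metis ereal_less_eq(3))
  moreover have "(1::real) < 2 powr (1/4)"
    by simp
  ultimately show ?thesis
    by linarith
qed

lemma cfq_le_const_mult_power:
  assumes "limsup (\<lambda>l. ereal (real (cfq a l) powr (1 / real l))) = ereal M" and "M < M'" and "1 \<le> M'"
  obtains B where "\<And>l. real (cfq a l) \<le> B * M' ^ l"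
proof -
  have "eventually (\<lambda>l. ereal (real (cfq a l) powr (1 / real l)) < ereal M') sequentially"
    using assms(1,2) by (intro Limsup_lessD) simp
  then obtain L where L: "\<And>l. l \<ge> L \<Longrightarrow> real (cfq a l) powr (1 / real l) < M'"
    unfolding eventually_sequentially by auto
  define B where "B = 1 + (\<Sum>l\<le>L. real (cfq a l))"
  have B: "1 \<le> B"
    unfolding B_def by (simp add: sum_nonneg)
  have "real (cfq a l) \<le> B * M' ^ l" for l
  proof (cases "l \<le> L")
    case True
    then have "real (cfq a l) \<le> B"
      unfolding B_def using member_le_sum[of l "{..L}" "\<lambda>l. real (cfq a l)"] by simp
    also have "\<dots> \<le> B * M' ^ l"
      using B one_le_power[OF assms(3), of l] by (simp add: mult_le_cancel_left1)
    finally show ?thesis .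
  next
    case False
    then have "real (cfq a l) = (real (cfq a l) powr (1 / real l)) powr real l"
      using cfq_pos[of l] by (simp add: powr_powr)
    also have "\<dots> \<le> M' powr real l"
      using L[of l] False by (intro powr_mono2) auto
    also have "\<dots> \<le> B * M' ^ l"
      using B assms(3) mult_right_mono[OF B, of "M' ^ l"] by (simp add: powr_realpow)
    finally show ?thesis .
  qed
  then show ?thesis
    by (rule that)
qed

lemma eventually_power_le_cfq:
  assumes "liminf (\<lambda>l. ereal (real (cfq a l) powr (1 / real l))) = ereal m" and "m' < m" and "0 < m'"
  shows "eventually (\<lambda>l. m' ^ l \<le> real (cfq a l)) sequentially"
proof -
  have "eventually (\<lambda>l. ereal m' < ereal (real (cfq a l) powr (1 / real l))) sequentially"
    using assms(1,2) by (intro less_LiminfD) simp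
  then have "eventually (\<lambda>l. m' < real (cfq a l) powr (1 / real l) \<and> l > 0) sequentially"
    using eventually_gt_at_top[of 0] by (simp add: eventually_conj)
  then show ?thesis
  proof (rule eventually_mono)
    fix l :: nat
    assume l: "m' < real (cfq a l) powr (1 / real l) \<and> l > 0"
    have "m' ^ l = m' powr real l"
      using assms(3) by (simp add: powr_realpow)
    also have "\<dots> \<le> (real (cfq a l) powr (1 / real l)) powr real l"
      using l assms(3) by (intro powr_mono2) auto
    also have "\<dots> = real (cfq a l)"
      using l cfq_pos[of l] by (simp add: powr_powr)
    finally show "m' ^ l \<le> real (cfq a l)" .
  qed
qed

lemma palindrome_ratio_tendsto_0:
  fixes x M m :: real and U V :: "nat \<Rightarrow> nat list"
  assumes x: "0 < x" "x > 3 / 2 * (ln M / ln m) - 1 / 2"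
    and lengths: "\<forall>k\<ge>1. x * real (length (V k)) \<le> real (length (U k))"
    and U_at_top: "filterlim (\<lambda>k. length (U k)) at_top sequentially"
    and M: "limsup (\<lambda>l. ereal (real (cfq a l) powr (1 / real l))) = ereal M"
    and m: "liminf (\<lambda>l. ereal (real (cfq a l) powr (1 / real l))) = ereal m"
  shows "(\<lambda>k. real (cfq a (length (V k))) ^ 3 / real (cfq a (length (V k) + 2 * length (U k))))
           \<longlonglongrightarrow> 0"
proof -
  have "1 < m"
    by (rule liminf_root_cfq_gt_1[OF m])
  moreover have "m \<le> M"
    using Liminf_le_Limsup[of sequentially "\<lambda>l. ereal (real (cfq a l) powr (1 / real l))"] M m
    by simp
  ultimately obtain M' m' where rates: "M < M'" "1 < m'" "m' < m" "(3 * ln M' - ln m') / x < 2 * ln m'"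
    using exists_rates_beyond_bounds x by blast
  obtain B where B: "\<And>l. real (cfq a l) \<le> B * M' ^ l"
    using cfq_le_const_mult_power[OF M] rates \<open>m \<le> M\<close> \<open>1 < m\<close> by (metis less_eq_real_def order.strict_trans2)
  define r where "r = exp ((3 * ln M' - ln m') / x - 2 * ln m')"
  have r: "norm r < 1"
    unfolding r_def using rates by simp
  have N_at_top: "filterlim (\<lambda>k. length (V k) + 2 * length (U k)) at_top sequentially"
    by (rule filterlim_at_top_mono[OF U_at_top]) simp
  have "eventually (\<lambda>k. m' ^ (length (V k) + 2 * length (U k)) \<le> real (cfq a (length (V k) + 2 * length (U k))) \<and> k \<ge> 1) sequentially"
    using eventually_compose_filterlim[OF eventually_power_le_cfq[OF m rates(3)] N_at_top] rates(2)
    by (simp add: eventually_conj eventually_ge_at_top)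
  then have "eventually (\<lambda>k. norm (real (cfq a (length (V k))) ^ 3 / real (cfq a (length (V k) + 2 * length (U k))))
      \<le> B ^ 3 * r ^ length (U k)) sequentially"
  proof (rule eventually_mono, clarify)
    fix k :: nat
    assume "m' ^ (length (V k) + 2 * length (U k)) \<le> real (cfq a (length (V k) + 2 * length (U k)))"
      and "k \<ge> 1"
    then show "norm (real (cfq a (length (V k))) ^ 3 / real (cfq a (length (V k) + 2 * length (U k))))
        \<le> B ^ 3 * r ^ length (U k)"
      unfolding r_def using cube_ratio_le_power[OF x(1) _ rates(2) _ _ B] lengths rates \<open>m \<le> M\<close>
      by simp
  qed
  moreover have "(\<lambda>k. B ^ 3 * r ^ length (U k)) \<longlonglongrightarrow> 0"
    using filterlim_compose[OF LIMSEQ_power_zero[OF r] U_at_top] by (intro tendsto_mult_right_zero)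
  ultimately show ?thesis
    by (rule Lim_null_comparison)
qed

lemma eventually_palindrome_triple_product_le:
  fixes \<alpha> \<beta> :: real and a' b' c' d' :: int and U V :: "nat \<Rightarrow> nat list"
  assumes lim: "convergent \<longlonglongrightarrow> \<alpha>" and hom: "\<beta> * (c' * \<alpha> + d') = a' * \<alpha> + b'"
    and nonzero: "c' * \<alpha> + d' \<noteq> 0"
    and pal: "\<forall>k\<ge>1. begins_with a (V k @ U k @ rev (U k))"
    and U_at_top: "filterlim (\<lambda>k. length (U k)) at_top sequentially"
  shows "eventually (\<lambda>k. \<exists>q\<ge>1. real q * dnint (real q * \<alpha>) * dnint (real q * \<beta>) \<le>
           8 * (\<bar>c'\<bar> + \<bar>d'\<bar>)\<^sup>2 * (\<bar>a'\<bar> + \<bar>c'\<bar> * \<bar>\<beta>\<bar>) *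
           (real (cfq a (length (V k))) ^ 3 / real (cfq a (length (V k) + 2 * length (U k)))))
         sequentially"
proof -
  have "eventually (\<lambda>k. 2 * \<bar>c'\<bar> / \<bar>c' * \<alpha> + d'\<bar> < real (length (U k))) sequentially"
    using filterlim_compose[OF filterlim_real_sequentially U_at_top] by (simp add: filterlim_at_top_dense)
  then have "eventually (\<lambda>k. 2 * \<bar>c'\<bar> / \<bar>c' * \<alpha> + d'\<bar> < real (length (U k)) \<and> k \<ge> 1) sequentially"
    by (simp add: eventually_conj eventually_ge_at_top)
  then show ?thesis
  proof (rule eventually_mono, clarify)
    fix k :: nat
    assume "2 * \<bar>c'\<bar> / \<bar>c' * \<alpha> + d'\<bar> < real (length (U k))" "k \<ge> 1"
    moreover have "real (length (U k)) < real (cfq a (length (V k) + 2 * length (U k)))"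
      using length_lt_cfq by simp
    ultimately have "2 * \<bar>c'\<bar> / \<bar>c' * \<alpha> + d'\<bar> < real (cfq a (length (V k) + 2 * length (U k)))"
      by linarith
    then have "2 * \<bar>c'\<bar> < real (cfq a (length (V k) + 2 * length (U k))) * \<bar>c' * \<alpha> + d'\<bar>"
      using nonzero by (simp add: divide_less_eq)
    then show "\<exists>q\<ge>1. real q * dnint (real q * \<alpha>) * dnint (real q * \<beta>) \<le>
           8 * (\<bar>c'\<bar> + \<bar>d'\<bar>)\<^sup>2 * (\<bar>a'\<bar> + \<bar>c'\<bar> * \<bar>\<beta>\<bar>) *
           (real (cfq a (length (V k))) ^ 3 / real (cfq a (length (V k) + 2 * length (U k))))"
      using palindrome_triple_product_le[OF lim hom] pal \<open>k \<ge> 1\<close> by blast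
  qed
qed

end

theorem theorem5:
  fixes \<alpha> x M m :: real and a :: "nat \<Rightarrow> nat" and U V :: "nat \<Rightarrow> nat list"
  assumes cf: "is_cf_expansion \<alpha> a"
    and bad: "\<alpha> \<in> Bad"
    and x_rat: "x \<in> \<rat>" and x_pos: "x > 0"
    and words: "\<forall>k\<ge>1. (\<forall>w\<in>set (V k @ U k @ rev (U k)). w > 0)
                      \<and> begins_with a (V k @ U k @ rev (U k))
                      \<and> length (U (Suc k)) > length (U k)
                      \<and> real (length (U k)) \<ge> x * real (length (V k))"
    and M_def: "limsup (\<lambda>l. ereal (real (cfq a l) powr (1 / real l))) = ereal M"
    and m_def: "liminf (\<lambda>l. ereal (real (cfq a l) powr (1 / real l))) = ereal m"
    and x_big: "x > 3 / 2 * (ln M / ln m) - 1 / 2"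
  shows "\<forall>\<beta>. (\<exists>a' b' c' d' :: int. a' * d' - b' * c' \<noteq> 0 \<and>
                 \<beta> = (of_int a' * \<alpha> + of_int b') / (of_int c' * \<alpha> + of_int d'))
           \<longrightarrow> (INF q\<in>{1::nat..}. real q * dnint (real q * \<alpha>) * dnint (real q * \<beta>)) = 0"
proof (intro allI impI)
  fix \<beta>
  assume "\<exists>a' b' c' d' :: int. a' * d' - b' * c' \<noteq> 0 \<and>
            \<beta> = (of_int a' * \<alpha> + of_int b') / (of_int c' * \<alpha> + of_int d')"
  then obtain a' b' c' d' :: int where \<beta>: "\<beta> = (a' * \<alpha> + b') / (c' * \<alpha> + d')"
    by blast
  interpret pos_partial_quotients a
    using cf unfolding is_cf_expansion_def by unfold_locales auto
  have lim: "convergent \<longlonglongrightarrow> \<alpha>"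
    using cf unfolding is_cf_expansion_def by simp
  have U_at_top: "filterlim (\<lambda>k. length (U k)) at_top sequentially"
    using words by (intro filterlim_at_top_if_increasing_from_1) auto
  have nonneg: "0 \<le> real q * dnint (real q * \<alpha>) * dnint (real q * \<beta>)" for q :: nat
    by (simp add: dnint_nonneg)
  show "(INF q\<in>{1::nat..}. real q * dnint (real q * \<alpha>) * dnint (real q * \<beta>)) = 0"
  proof (cases "c' * \<alpha> + d' = 0")
    case True
    then have "\<beta> = 0" \<comment> \<open>division by zero\<close>
      using \<beta> by simp
    then show ?thesis
      by (intro INF_eq_0_if_eventually_le_null[where g = "\<lambda>_. 0"] nonneg) (auto simp: dnint_def)
  next
    case False
    then have hom: "\<beta> * (c' * \<alpha> + d') = a' * \<alpha> + b'"
      using \<beta> by simp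
    have lengths: "\<forall>k\<ge>1. x * real (length (V k)) \<le> real (length (U k))"
      and pal: "\<forall>k\<ge>1. begins_with a (V k @ U k @ rev (U k))"
      using words by auto
    show ?thesis
      by (rule INF_eq_0_if_eventually_le_null[OF nonneg
            tendsto_mult_right_zero[OF palindrome_ratio_tendsto_0[OF x_pos x_big lengths U_at_top M_def m_def]]
            eventually_palindrome_triple_product_le[OF lim hom False pal U_at_top]])
  qed
qed

end
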